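(* Let $\hat B=(\hat\beta_{k,j})$ and $\tilde B_0=(\tilde\beta^0_{k,j})$ be real $p\times p$ matrices, let $\hat s$ and $\tilde s$ be their numbers of nonzero entries, and let $\tilde\lambda>0$, $0\le\eta_1<1$, $0<\eta_2^2<1-\eta_1$. Suppose $\|\hat B-\tilde B_0\|_F\le\tilde\lambda\sqrt{\tilde s}$ and $$\#\{(k,j):|\tilde\beta^0_{k,j}|\ge\tilde\lambda/\eta_2\}\ge(1-\eta_1)\tilde s.$$ Then $\hat s\ge(1-\eta_1-\eta_2^2)\tilde s$.
   Context: $\|\cdot\|_F$ denotes the Frobenius norm. *)

theory Defs
  imports "HOL-Analysis.Analysis"
begin

definition frob_norm :: "real^'n^'m \<Rightarrow> real" where
  "frob_norm A = sqrt (\<Sum>k\<in>UNIV. \<Sum>j\<in>UNIV. (A $ k $ j)\<^sup>2)"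

definition nnz :: "real^'n^'m \<Rightarrow> nat" where
  "nnz A = card {(k, j). A $ k $ j \<noteq> 0}"

end

theory Submission
  imports Defs
begin

text \<open>Every large entry of \<open>B\<^sub>0\<close> that \<open>B\<close> sets to zero contributes at least
  \<open>(\<lambda>/\<eta>\<^sub>2)\<^sup>2\<close> to \<open>\<parallel>B - B\<^sub>0\<parallel>\<^sub>F\<^sup>2 \<le> \<lambda>\<^sup>2 s\<close>, so at most \<open>\<eta>\<^sub>2\<^sup>2 s\<close> large entries
  are lost; the remaining ones, at least \<open>(1 - \<eta>\<^sub>1 - \<eta>\<^sub>2\<^sup>2) s\<close> of them, are nonzero in \<open>B\<close>.\<close>

lemma frob_norm_nonneg: "0 \<le> frob_norm A"
  unfolding frob_norm_def by (simp add: sum_nonneg)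

lemma frob_norm_square: "(frob_norm A)\<^sup>2 = (\<Sum>(k, j)\<in>UNIV. (A $ k $ j)\<^sup>2)"
  unfolding frob_norm_def
  by (simp add: sum_nonneg sum.cartesian_product UNIV_Times_UNIV[symmetric] del: UNIV_Times_UNIV)
    (auto intro: sum_nonneg)

lemma card_mult_le_sum_of_ge:
  fixes f :: "'a \<Rightarrow> real"
  assumes "finite A" and "\<And>x. x \<in> A \<Longrightarrow> 0 \<le> f x"
  shows "real (card {x \<in> A. t \<le> f x}) * t \<le> sum f A"
proof -
  have "real (card {x \<in> A. t \<le> f x}) * t = (\<Sum>x\<in>{x \<in> A. t \<le> f x}. t)"
    by simp
  also have "\<dots> \<le> (\<Sum>x\<in>{x \<in> A. t \<le> f x}. f x)"
    by (rule sum_mono) simp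
  also have "\<dots> \<le> sum f A"
    using assms by (intro sum_mono2) auto
  finally show ?thesis .
qed

lemma card_zeroed_entries_le:
  fixes B B\<^sub>0 :: "real^'n^'m"
  assumes "t > 0" and "frob_norm (B - B\<^sub>0) \<le> r"
  shows "real (card {(k, j). t \<le> \<bar>B\<^sub>0 $ k $ j\<bar> \<and> B $ k $ j = 0}) * t\<^sup>2 \<le> r\<^sup>2"
proof -
  let ?f = "\<lambda>(k, j). ((B - B\<^sub>0) $ k $ j)\<^sup>2"
  have "t\<^sup>2 \<le> ((B - B\<^sub>0) $ k $ j)\<^sup>2" if "t \<le> \<bar>B\<^sub>0 $ k $ j\<bar>" and "B $ k $ j = 0" for k j
  proof -
    have "t\<^sup>2 \<le> \<bar>B\<^sub>0 $ k $ j\<bar>\<^sup>2"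
      using assms(1) that(1) by (intro power_mono) auto
    then show ?thesis
      using that(2) by simp
  qed
  then have "{(k, j). t \<le> \<bar>B\<^sub>0 $ k $ j\<bar> \<and> B $ k $ j = 0} \<subseteq> {x \<in> UNIV. t\<^sup>2 \<le> ?f x}"
    by auto
  then have "real (card {(k, j). t \<le> \<bar>B\<^sub>0 $ k $ j\<bar> \<and> B $ k $ j = 0}) * t\<^sup>2
      \<le> real (card {x \<in> UNIV. t\<^sup>2 \<le> ?f x}) * t\<^sup>2"
    by (intro mult_right_mono card_mono of_nat_mono) auto
  also have "\<dots> \<le> sum ?f UNIV"
    by (rule card_mult_le_sum_of_ge) auto
  also have "\<dots> = (frob_norm (B - B\<^sub>0))\<^sup>2"
    by (simp add: frob_norm_square)
  also have "\<dots> \<le> r\<^sup>2"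
    using assms(2) by (simp add: frob_norm_nonneg power_mono)
  finally show ?thesis .
qed

lemma card_ge_le_nnz_plus_zeroed:
  fixes B B\<^sub>0 :: "real^'n^'m"
  shows "card {(k, j). t \<le> \<bar>B\<^sub>0 $ k $ j\<bar>}
    \<le> nnz B + card {(k, j). t \<le> \<bar>B\<^sub>0 $ k $ j\<bar> \<and> B $ k $ j = 0}"
proof -
  have "{(k, j). t \<le> \<bar>B\<^sub>0 $ k $ j\<bar>}
      \<subseteq> {(k, j). B $ k $ j \<noteq> 0} \<union> {(k, j). t \<le> \<bar>B\<^sub>0 $ k $ j\<bar> \<and> B $ k $ j = 0}"
    by auto
  then have "card {(k, j). t \<le> \<bar>B\<^sub>0 $ k $ j\<bar>}
      \<le> card ({(k, j). B $ k $ j \<noteq> 0} \<union> {(k, j). t \<le> \<bar>B\<^sub>0 $ k $ j\<bar> \<and> B $ k $ j = 0})"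
    by (rule card_mono[OF finite])
  also have "\<dots> \<le> nnz B + card {(k, j). t \<le> \<bar>B\<^sub>0 $ k $ j\<bar> \<and> B $ k $ j = 0}"
    unfolding nnz_def by (rule card_Un_le)
  finally show ?thesis .
qed

theorem lemma7p2:
  fixes Bhat Bt0 :: "real^'p^'p" and lam eta1 eta2 :: real
  assumes "lam > 0" and "0 \<le> eta1" and "eta1 < 1"
    and "0 < eta2" and "eta2\<^sup>2 < 1 - eta1"
    and "frob_norm (Bhat - Bt0) \<le> lam * sqrt (real (nnz Bt0))"
    and "real (card {(k, j). \<bar>Bt0 $ k $ j\<bar> \<ge> lam / eta2}) \<ge> (1 - eta1) * real (nnz Bt0)"
  shows "real (nnz Bhat) \<ge> (1 - eta1 - eta2\<^sup>2) * real (nnz Bt0)"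
proof -
  define s where "s = real (nnz Bt0)"
  define zeroed where "zeroed = real (card {(k, j). lam / eta2 \<le> \<bar>Bt0 $ k $ j\<bar> \<and> Bhat $ k $ j = 0})"
  have "zeroed * (lam / eta2)\<^sup>2 \<le> (lam * sqrt s)\<^sup>2"
    unfolding zeroed_def s_def using assms(1,4,6) by (intro card_zeroed_entries_le) auto
  then have "zeroed * lam\<^sup>2 \<le> eta2\<^sup>2 * s * lam\<^sup>2"
    using assms(4) by (simp add: power_mult_distrib power_divide field_simps s_def)
  then have "zeroed \<le> eta2\<^sup>2 * s"
    using assms(1) by simp
  moreover have "real (card {(k, j). lam / eta2 \<le> \<bar>Bt0 $ k $ j\<bar>}) \<le> real (nnz Bhat) + zeroed"
    unfolding zeroed_def using card_ge_le_nnz_plus_zeroed[of "lam / eta2" Bt0 Bhat] by linarith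
  ultimately show ?thesis
    using assms(7) unfolding s_def by (simp add: algebra_simps)
qed

end
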